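(* Consider $n$ agents in the plane evolving according to the piecewise continuous-time dynamics described in the context, with blind-zone radius $\delta>0$. Suppose that at the beginning $t=k$ (an integer) of a time-interval $[k,k+1)$, the agents are not all confined in a disc of radius $\delta$. Then there is an agent which, with a strictly positive probability bounded below by a constant depending only on $n$ (conditionally on the configuration at time $k$), moves during $[k,k+1)$ a distance bounded away from zero by a constant depending only on $n$ and $\delta$ (not on the configuration).
   Context: Agents $1,\dots,n$ have positions $p_i(t)\in\mathbb{R}^2$. Fix $\delta>0$. For each integer $k\ge 0$ and each agent $i$, let $\chi^{(i)}_k$ be independent random variables, uniformly distributed on $[0,2\pi)$, and set the heading $\theta_i(t)=\chi^{(i)}_k$ for $t\in[k,k+1)$, with unit heading vector $\hat\theta_i(t)=(\cos\theta_i(t),\sin\theta_i(t))^\top$. The motion law is $\dot p_i(t)=\hat\theta_i(t)\,s_i(t)$, where $s_i(t)=0$ if there exists an agent $j$ with $d_{ij}(t)>\delta$ and $\hat\theta_i(t)^\top\big(p_j(t)-p_i(t)\big)\le 0$, and $s_i(t)=1$ otherwise. Here $d_{ij}(t)=\|p_i(t)-p_j(t)\|$. Each time-interval $[k,k+1)$ has length $\Delta t=1$. *)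

theory Defs
  imports "HOL-Probability.Probability"
begin

definition heading :: "real \<Rightarrow> real^2" where
  "heading a = vector [cos a, sin a]"

definition agent_speed :: "nat \<Rightarrow> real \<Rightarrow> real \<Rightarrow> (nat \<Rightarrow> real^2) \<Rightarrow> nat \<Rightarrow> real" where
  "agent_speed n \<delta> a p i =
     (if \<exists>j<n. dist (p i) (p j) > \<delta> \<and> heading a \<bullet> (p j - p i) \<le> 0 then 0 else 1)"

text \<open>P is a solution of the dynamics on the time interval [k,k+1] with heading angles
  theta (constant on the interval) and initial configuration p0 at time k:
  continuous on [k,k+1], and the derivative equation holds on (k,k+1) except possibly
  on a countable set of (switching) times.\<close>
definition is_solution ::
  "nat \<Rightarrow> real \<Rightarrow> nat \<Rightarrow> (nat \<Rightarrow> real) \<Rightarrow> (nat \<Rightarrow> real^2) \<Rightarrow> (real \<Rightarrow> nat \<Rightarrow> real^2) \<Rightarrow> bool" where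
  "is_solution n \<delta> k \<theta> p0 P \<longleftrightarrow>
     (\<forall>i<n. P (real k) i = p0 i) \<and>
     (\<forall>i<n. continuous_on {real k..real k + 1} (\<lambda>t. P t i)) \<and>
     (\<exists>S. countable S \<and>
        (\<forall>t\<in>{real k<..<real k + 1} - S. \<forall>i<n.
           ((\<lambda>\<tau>. P \<tau> i) has_vector_derivative
              (agent_speed n \<delta> (\<theta> i) (P t) i *\<^sub>R heading (\<theta> i))) (at t)))"

definition heading_measure :: "nat \<Rightarrow> (nat \<Rightarrow> real) measure" where
  "heading_measure n = PiM {..<n} (\<lambda>_. uniform_measure lborel {0..<2*pi})"

end

theory Submission
  imports Defs
begin

(*
  Take the 2n+1 directions 2 pi m / (2n+1). For each of them some agent is extreme, i.e. all
  agents lie in the closed half-plane in front of it; by pigeonhole one agent i is extreme for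
  two of these directions, and since 2n+1 is odd they can be chosen less than a half-turn apart.
  All agents then lie in a cone at p_i around the bisector direction phi, with
  heading phi . (p_j - p_i) >= sigma |p_j - p_i|, sigma = sin (pi / (2n+1)).
  Every heading within sigma/2 of phi, an event of probability sigma / (4 pi), keeps this with
  sigma/2. While all agents have moved by less than sigma delta / 8, every agent farther than
  delta from i is still strictly in front of i, so i is not blocked and moves at unit speed;
  afterwards its progress along its heading cannot decrease.
*)

lemma last_crossing:
  fixes G :: "real \<Rightarrow> real"
  assumes "a \<le> b" and cont: "continuous_on {a..b} G" and "G a \<le> y" "y < G b"
  obtains t where "a \<le> t" "t < b" "G t = y" "\<And>s. t < s \<Longrightarrow> s \<le> b \<Longrightarrow> y < G s"
proof -
  define A where "A = {s \<in> {a..b}. G s \<le> y}"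
  define t where "t = Sup A"
  have "A = {a..b} \<inter> G -` {..y}" by (auto simp: A_def)
  then have "closed A"
    using continuous_closed_preimage[OF cont closed_atLeastAtMost closed_atMost] by simp
  moreover have bdd: "bdd_above A" and "a \<in> A" using assms by (auto simp: A_def)
  ultimately have "t \<in> A" unfolding t_def using closed_contains_Sup by blast
  then have t: "a \<le> t" "t \<le> b" "G t \<le> y" by (auto simp: A_def)
  have above: "y < G s" if "t < s" "s \<le> b" for s
  proof (rule ccontr)
    assume "\<not> y < G s"
    then have "s \<in> A" using that t by (auto simp: A_def)
    then show False using cSup_upper[OF _ bdd] that(1) by (force simp: t_def)
  qed
  have "t < b" using t \<open>y < G b\<close> by (cases "t = b") auto
  moreover have "continuous_on {t..b} G" using cont by (rule continuous_on_subset) (use t in auto)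
  then obtain s where s: "t \<le> s" "s \<le> b" "G s = y"
    using IVT'[of G t y b] t \<open>y < G b\<close> by auto
  then have "s = t" using above[of s] by (cases "s = t") auto
  ultimately show thesis using that t s above by blast
qed

(* Solutions are differentiable only off a countable set. Off S the derivative bound makes G
   drop right after its last crossing of a level, so every level in (0, G b) is crossed at a
   point of S; there are uncountably many levels. *)
lemma increment_le_of_deriv_le_countable:
  fixes g :: "real \<Rightarrow> real"
  assumes "a \<le> b" and cont: "continuous_on {a..b} g" and "countable S"
    and deriv: "\<And>t. t \<in> {a<..<b} - S \<Longrightarrow> \<exists>D. (g has_real_derivative D) (at t) \<and> D \<le> B"
  shows "g b - g a \<le> B * (b - a)"
proof (rule ccontr)
  assume contra: "\<not> ?thesis"
  then have "a < b" using \<open>a \<le> b\<close> by (cases "a = b") auto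
  define e where "e = (g b - g a - B * (b - a)) / (2 * (b - a))"
  define G where "G t = g t - g a - (B + e) * (t - a)" for t
  have "0 < e" using contra \<open>a < b\<close> by (simp add: e_def)
  have "G a = 0" by (simp add: G_def)
  have "e * (b - a) = (g b - g a - B * (b - a)) / 2" using \<open>a < b\<close> by (simp add: e_def field_simps)
  then have "0 < G b" using contra by (simp add: G_def algebra_simps)
  have contG: "continuous_on {a..b} G" unfolding G_def by (intro continuous_intros cont)
  have "{0<..<G b} \<subseteq> G ` S"
  proof
    fix y assume y: "y \<in> {0<..<G b}"
    obtain t where t: "a \<le> t" "t < b" "G t = y" and above: "\<And>s. t < s \<Longrightarrow> s \<le> b \<Longrightarrow> y < G s"
      using last_crossing[OF \<open>a \<le> b\<close> contG, of y] y \<open>G a = 0\<close> by auto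
    have "t \<in> S"
    proof (rule ccontr)
      assume "t \<notin> S"
      moreover have "a < t" using t y \<open>G a = 0\<close> by (cases "a = t") auto
      ultimately obtain D where D: "(g has_real_derivative D) (at t)" "D \<le> B"
        using deriv t by auto
      then have "(G has_real_derivative D - (B + e)) (at t)"
        unfolding G_def by (auto intro!: derivative_eq_intros)
      moreover have "D - (B + e) < 0" using D \<open>0 < e\<close> by simp
      ultimately obtain h where "0 < h" and dec: "\<And>s. 0 < s \<Longrightarrow> s < h \<Longrightarrow> G (t + s) < G t"
        using DERIV_neg_dec_right by blast
      define s where "s = min (h / 2) (b - t)"
      have "0 < s" "s < h" "t + s \<le> b" using \<open>0 < h\<close> t by (auto simp: s_def)
      then show False using dec[of s] above[of "t + s"] t by simp
    qed
    then show "y \<in> G ` S" using t by blast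
  qed
  then have "countable {0<..<G b}" using \<open>countable S\<close> countable_subset by blast
  then show False using \<open>0 < G b\<close> uncountable_open_interval by blast
qed

lemma increment_ge_of_deriv_ge_countable:
  fixes g :: "real \<Rightarrow> real"
  assumes "a \<le> b" and "continuous_on {a..b} g" and "countable S"
    and "\<And>t. t \<in> {a<..<b} - S \<Longrightarrow> \<exists>D. (g has_real_derivative D) (at t) \<and> B \<le> D"
  shows "B * (b - a) \<le> g b - g a"
  using increment_le_of_deriv_le_countable[of a b "\<lambda>t. - g t" S "- B"] assms
  by (force intro: continuous_intros DERIV_minus)

lemma norm_increment_le_of_deriv_le_countable:
  fixes f :: "real \<Rightarrow> 'a::real_inner"
  assumes "a \<le> b" and cont: "continuous_on {a..b} f" and "countable S" and "0 \<le> B"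
    and deriv: "\<And>t. t \<in> {a<..<b} - S \<Longrightarrow> \<exists>v. (f has_vector_derivative v) (at t) \<and> norm v \<le> B"
  shows "norm (f b - f a) \<le> B * (b - a)"
proof -
  define e where "e = f b - f a"
  have "e \<bullet> f b - e \<bullet> f a \<le> (norm e * B) * (b - a)"
  proof (rule increment_le_of_deriv_le_countable[OF \<open>a \<le> b\<close> _ \<open>countable S\<close>])
    show "continuous_on {a..b} (\<lambda>t. e \<bullet> f t)" by (intro continuous_intros cont)
    fix t assume "t \<in> {a<..<b} - S"
    then obtain v where v: "(f has_vector_derivative v) (at t)" "norm v \<le> B" using deriv by blast
    have "((\<lambda>t. e \<bullet> f t) has_real_derivative e \<bullet> v) (at t)"
      using bounded_linear.has_vector_derivative[OF bounded_linear_inner_right v(1)]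
      by (simp add: has_real_derivative_iff_has_vector_derivative)
    moreover have "e \<bullet> v \<le> norm e * B"
      using norm_cauchy_schwarz[of e v] mult_left_mono[OF v(2) norm_ge_zero[of e]] by linarith
    ultimately show "\<exists>D. ((\<lambda>t. e \<bullet> f t) has_real_derivative D) (at t) \<and> D \<le> norm e * B" by blast
  qed
  then have "norm e * norm e \<le> norm e * (B * (b - a))"
    by (simp add: e_def flip: inner_diff_right power2_norm_eq_inner power2_eq_square mult.assoc)
  moreover have "0 \<le> B * (b - a)" using \<open>0 \<le> B\<close> \<open>a \<le> b\<close> by simp
  ultimately show ?thesis
    unfolding e_def[symmetric] by (cases "norm e = 0") (auto simp: mult_le_cancel_left)
qed

lemma heading_nth [simp]: "heading a $ 1 = cos a" "heading a $ 2 = sin a"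
  by (simp_all add: heading_def)

lemma inner_heading: "heading a \<bullet> x = cos a * x $ 1 + sin a * x $ 2"
  by (simp add: inner_vec_def sum_2)

lemma inner_heading_self [simp]: "heading a \<bullet> heading a = 1"
  by (simp add: inner_heading power2_eq_square [symmetric])

lemma norm_heading [simp]: "norm (heading a) = 1"
  by (simp add: norm_eq_sqrt_inner)

lemma heading_add_2pi_int: "heading (a + 2 * pi * of_int k) = heading a"
  by (simp add: heading_def cos_add sin_add)

lemma heading_add_2pi: "heading (a + 2 * pi) = heading a"
  by (simp add: heading_def)

lemma heading_mod_2pi:
  obtains a' where "0 \<le> a'" "a' < 2 * pi" "heading a' = heading a"
proof -
  define k where "k = \<lfloor>a / (2 * pi)\<rfloor>"
  have "of_int k \<le> a / (2 * pi)" "a / (2 * pi) < of_int k + 1"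
    unfolding k_def by linarith+
  then have "2 * pi * of_int k \<le> a" "a < 2 * pi * of_int k + 2 * pi"
    by (simp_all add: field_simps)
  then show thesis
    using that[of "a + 2 * pi * of_int (- k)"] heading_add_2pi_int[of a "- k"] by simp
qed

lemma norm_heading_diff_le: "norm (heading a - heading b) \<le> \<bar>a - b\<bar>"
proof -
  define x where "x = (a - b) / 2"
  have ab: "a - b = 2 * x" by (simp add: x_def)
  have "(norm (heading a - heading b))\<^sup>2 = 2 - 2 * cos (a - b)"
    by (simp add: power2_norm_eq_inner inner_diff_left inner_diff_right inner_heading cos_diff)
  also have "\<dots> = (2 * sin x)\<^sup>2"
    by (simp add: ab cos_double_sin power_mult_distrib)
  also have "\<dots> \<le> (a - b)\<^sup>2"
    using abs_sin_x_le_abs_x[of x] by (simp add: ab abs_mult flip: abs_le_square_iff)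
  finally show ?thesis using abs_le_square_iff[of "norm (heading a - heading b)" "a - b"] by simp
qed

lemma inner_ge_of_norm_diff_le:
  fixes h h' q :: "'a::real_inner"
  assumes "s * norm q \<le> h \<bullet> q" and "norm (h' - h) \<le> r"
  shows "(s - r) * norm q \<le> h' \<bullet> q"
proof -
  have "- (r * norm q) \<le> (h' - h) \<bullet> q"
    using Cauchy_Schwarz_ineq2[of "h' - h" q] mult_right_mono[OF assms(2) norm_ge_zero[of q]] by linarith
  then show ?thesis using assms(1) by (simp add: inner_diff_left algebra_simps)
qed

lemma inner_heading_bisector_ge:
  fixes q :: "real^2"
  assumes "0 < b" "b < pi / 2"
    and "0 \<le> heading (c - b) \<bullet> q" "0 \<le> heading (c + b) \<bullet> q"
  shows "sin b * norm q \<le> heading c \<bullet> q"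
proof -
  define A where "A = cos c * q $ 1 + sin c * q $ 2"
  define B where "B = cos c * q $ 2 - sin c * q $ 1"
  have "heading (c - b) \<bullet> q = cos b * A - sin b * B" "heading (c + b) \<bullet> q = cos b * A + sin b * B"
    by (simp_all add: inner_heading cos_diff sin_diff cos_add sin_add A_def B_def algebra_simps)
  then have AB: "sin b * \<bar>B\<bar> \<le> cos b * A" using assms(3,4) by (auto simp: abs_if)
  have "0 < sin b" "0 < cos b" using assms(1,2) by (auto intro: sin_gt_zero cos_gt_zero)
  then have "0 \<le> A" using AB by (smt (verit) abs_ge_zero mult_nonneg_nonneg zero_le_mult_iff)
  have "A\<^sup>2 + B\<^sup>2 = (sin c ^ 2 + cos c ^ 2) * ((q $ 1)\<^sup>2 + (q $ 2)\<^sup>2)"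
    unfolding A_def B_def by algebra
  moreover have "(norm q)\<^sup>2 = (q $ 1)\<^sup>2 + (q $ 2)\<^sup>2"
    unfolding power2_norm_eq_inner by (simp add: inner_vec_def sum_2 power2_eq_square)
  ultimately have "(norm q)\<^sup>2 = A\<^sup>2 + B\<^sup>2" by simp
  then have "(sin b * norm q)\<^sup>2 = (sin b)\<^sup>2 * A\<^sup>2 + (sin b * \<bar>B\<bar>)\<^sup>2"
    by (simp add: power_mult_distrib distrib_left)
  also have "\<dots> \<le> (sin b)\<^sup>2 * A\<^sup>2 + (cos b * A)\<^sup>2"
    using AB \<open>0 < sin b\<close> by (simp add: power_mono)
  also have "\<dots> = A\<^sup>2"
    by (simp add: power_mult_distrib flip: distrib_right)
  finally have "sin b * norm q \<le> A" using \<open>0 \<le> A\<close> by (rule power2_le_imp_le)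
  then show ?thesis by (simp add: inner_heading A_def)
qed

lemma exists_agent_supporting_two_headings:
  fixes p :: "nat \<Rightarrow> real^2"
  assumes "0 < n"
  obtains i \<alpha> g where "i < n" "0 < g" "2 * g < 2 * n + 1"
    "\<And>j. j < n \<Longrightarrow> 0 \<le> heading \<alpha> \<bullet> (p j - p i)"
    "\<And>j. j < n \<Longrightarrow> 0 \<le> heading (\<alpha> + 2 * pi * real g / (2 * real n + 1)) \<bullet> (p j - p i)"
proof -
  define N where "N = 2 * n + 1"
  define w where "w = 2 * pi / (2 * real n + 1)"
  have "real N = 2 * real n + 1" "0 < 2 * real n + 1" by (simp_all add: N_def)
  then have Nw: "real N * w = 2 * pi" by (simp add: w_def)
  have gw: "2 * pi * r / (2 * real n + 1) = r * w" for r by (simp add: w_def)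
  have "\<exists>i<n. \<forall>j<n. 0 \<le> heading (real m * w) \<bullet> (p j - p i)" for m
    using ex_is_arg_min_if_finite[of "{..<n}" "\<lambda>j. heading (real m * w) \<bullet> p j"] \<open>0 < n\<close>
    by (auto simp: is_arg_min_linorder inner_diff_right)
  then obtain f where f: "\<And>m. f m < n" "\<And>m j. j < n \<Longrightarrow> 0 \<le> heading (real m * w) \<bullet> (p j - p (f m))"
    by metis
  have "card (f ` {..<N}) \<le> card {..<n}"
    using f(1) by (intro card_mono) auto
  then have "\<not> inj_on f {..<N}"
    by (intro pigeonhole) (simp add: N_def)
  then obtain x y where xy: "x < y" "y < N" "f x = f y"
    unfolding inj_on_def by (metis lessThan_iff linorder_neqE_nat order.strict_trans)
  \<comment> \<open>N is odd, so one of the two arcs between the directions x and y is less than a half-turn.\<close>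
  have "2 * (y - x) < N \<or> 2 * (N - (y - x)) < N"
    using xy unfolding N_def by presburger
  then show thesis
  proof
    assume short: "2 * (y - x) < N"
    have "real x * w + real (y - x) * w = real y * w"
      using xy by (simp add: of_nat_diff algebra_simps)
    with f(1) xy short show thesis
      using f(2)[of _ x] f(2)[of _ y]
      by (intro that[of "f x" "y - x" "real x * w"]) (auto simp: N_def gw)
  next
    assume long: "2 * (N - (y - x)) < N"
    have "real y * w + real (N - (y - x)) * w = real x * w + 2 * pi"
      using xy Nw by (simp add: of_nat_diff algebra_simps)
    with f(1) xy long show thesis
      using f(2)[of _ x] f(2)[of _ y]
      by (intro that[of "f x" "N - (y - x)" "real y * w"]) (auto simp: N_def gw heading_add_2pi)
  qed
qed

lemma sin_pi_div_odd_gt_0: "0 < n \<Longrightarrow> 0 < sin (pi / (2 * real n + 1))"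
  by (intro sin_gt_zero) (simp_all add: field_simps)

lemma exists_heading_cone:
  fixes p :: "nat \<Rightarrow> real^2"
  assumes "0 < n"
  obtains i \<phi> where "i < n" "0 \<le> \<phi>" "\<phi> < 2 * pi"
    "\<And>j. j < n \<Longrightarrow> sin (pi / (2 * real n + 1)) * norm (p j - p i) \<le> heading \<phi> \<bullet> (p j - p i)"
proof -
  obtain i \<alpha> g where i: "i < n" and g: "0 < g" "2 * g < 2 * n + 1"
    and supp: "\<And>j. j < n \<Longrightarrow> 0 \<le> heading \<alpha> \<bullet> (p j - p i)"
      "\<And>j. j < n \<Longrightarrow> 0 \<le> heading (\<alpha> + 2 * pi * real g / (2 * real n + 1)) \<bullet> (p j - p i)"
    using exists_agent_supporting_two_headings[OF assms] by metis
  define b where "b = pi * real g / (2 * real n + 1)"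
  have "2 * real g < 2 * real n + 1" "1 \<le> real g" using g by linarith+
  then have "pi * 1 \<le> pi * real g" "pi * (2 * real g) < pi * (2 * real n + 1)"
    by (simp_all add: mult_strict_left_mono)
  then have b: "pi / (2 * real n + 1) \<le> b" "b < pi / 2"
    unfolding b_def by (intro divide_right_mono, simp_all add: field_simps)
  then have "0 < b" using sin_pi_div_odd_gt_0[OF assms] by (smt (verit) divide_pos_pos pi_gt_zero of_nat_0_le_iff)
  have sin_le: "sin (pi / (2 * real n + 1)) \<le> sin b"
    using b by (intro sin_monotone_2pi_le) (simp_all add: field_simps)
  have two_b: "\<alpha> + b + b = \<alpha> + 2 * pi * real g / (2 * real n + 1)" by (simp add: b_def)
  obtain \<phi> where \<phi>: "0 \<le> \<phi>" "\<phi> < 2 * pi" "heading \<phi> = heading (\<alpha> + b)"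
    using heading_mod_2pi by metis
  have "sin (pi / (2 * real n + 1)) * norm (p j - p i) \<le> heading \<phi> \<bullet> (p j - p i)" if "j < n" for j
  proof -
    have "sin b * norm (p j - p i) \<le> heading (\<alpha> + b) \<bullet> (p j - p i)"
      using inner_heading_bisector_ge[OF \<open>0 < b\<close> b(2), of "\<alpha> + b"] supp[OF that] two_b
      by simp
    then show ?thesis using mult_right_mono[OF sin_le norm_ge_zero[of "p j - p i"]] \<phi>(3) by simp
  qed
  with i \<phi> show thesis using that by blast
qed

lemma exists_heading_arc_cone:
  fixes p :: "nat \<Rightarrow> real^2"
  assumes "0 < n"
  defines "\<sigma> \<equiv> sin (pi / (2 * real n + 1))"
  obtains i u where "i < n" "0 \<le> u" "u + \<sigma> / 2 < 2 * pi"
    "\<And>a j. a \<in> {u..u + \<sigma> / 2} \<Longrightarrow> j < n \<Longrightarrow> \<sigma> / 2 * norm (p j - p i) \<le> heading a \<bullet> (p j - p i)"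
proof -
  obtain i \<phi> where i: "i < n" and \<phi>: "0 \<le> \<phi>" "\<phi> < 2 * pi"
    and cone: "\<And>j. j < n \<Longrightarrow> \<sigma> * norm (p j - p i) \<le> heading \<phi> \<bullet> (p j - p i)"
    using exists_heading_cone[OF assms(1)] unfolding \<sigma>_def by metis
  have \<sigma>: "0 < \<sigma>" "\<sigma> \<le> 1" using sin_pi_div_odd_gt_0[OF assms(1)] by (simp_all add: \<sigma>_def)
  obtain u where u: "0 \<le> u" "u + \<sigma> / 2 < 2 * pi" "\<phi> \<in> {u..u + \<sigma> / 2}"
  proof (cases "\<phi> \<le> pi")
    case True
    then show thesis using that[of \<phi>] \<phi> \<sigma> pi_gt3 by auto
  next
    case False
    then show thesis using that[of "\<phi> - \<sigma> / 2"] \<phi> \<sigma> pi_gt3 by auto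
  qed
  have "\<sigma> / 2 * norm (p j - p i) \<le> heading a \<bullet> (p j - p i)" if "a \<in> {u..u + \<sigma> / 2}" "j < n" for a j
  proof -
    have "norm (heading a - heading \<phi>) \<le> \<sigma> / 2"
      using norm_heading_diff_le[of a \<phi>] that(1) u(3) by auto
    then show ?thesis using inner_ge_of_norm_diff_le[OF cone[OF that(2)]] by fastforce
  qed
  with i u show thesis using that by blast
qed

lemma inner_pos_of_near_cone:
  fixes h q q' :: "'a::real_inner"
  assumes "norm h = 1" "0 < s" "s \<le> 1" "s * norm q \<le> h \<bullet> q"
    and "norm (q' - q) \<le> e" "2 * e \<le> s * \<delta>" "\<delta> < norm q'"
  shows "0 < h \<bullet> q'"
proof -
  have "- e \<le> h \<bullet> (q' - q)"
    using Cauchy_Schwarz_ineq2[of h "q' - q"] assms(1,5) by simp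
  moreover have "\<delta> - e < norm q"
    using norm_triangle_ineq[of q "q' - q"] assms(5,7) by simp
  then have "s * (\<delta> - e) < s * norm q" using \<open>0 < s\<close> by simp
  moreover have "s * e \<le> e"
    using mult_right_mono[OF \<open>s \<le> 1\<close>, of e] norm_ge_zero[of "q' - q"] assms(5) by simp
  ultimately show ?thesis using assms(4,6) by (simp add: inner_diff_right algebra_simps)
qed

lemma agent_speed_cases: "agent_speed n \<delta> a p i = 0 \<or> agent_speed n \<delta> a p i = 1"
  by (simp add: agent_speed_def)

lemma agent_speed_eq_1I:
  assumes "\<And>j. j < n \<Longrightarrow> \<delta> < dist (p i) (p j) \<Longrightarrow> 0 < heading a \<bullet> (p j - p i)"
  shows "agent_speed n \<delta> a p i = 1"
  using assms by (force simp: agent_speed_def)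

lemma is_solutionE:
  assumes "is_solution n \<delta> k \<theta> p0 P"
  obtains S where "countable S"
    "\<And>j. j < n \<Longrightarrow> P (real k) j = p0 j"
    "\<And>j. j < n \<Longrightarrow> continuous_on {real k..real k + 1} (\<lambda>t. P t j)"
    "\<And>t j. t \<in> {real k<..<real k + 1} - S \<Longrightarrow> j < n \<Longrightarrow>
       ((\<lambda>\<tau>. P \<tau> j) has_vector_derivative agent_speed n \<delta> (\<theta> j) (P t) j *\<^sub>R heading (\<theta> j)) (at t)"
  using assms unfolding is_solution_def by metis

lemma is_solution_dist_le:
  assumes sol: "is_solution n \<delta> k \<theta> p0 P" and "j < n" and t: "t \<in> {real k..real k + 1}"
  shows "dist (P t j) (p0 j) \<le> t - real k"
proof -
  obtain S where "countable S" and init: "P (real k) j = p0 j"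
    and cont: "continuous_on {real k..real k + 1} (\<lambda>t. P t j)"
    and deriv: "\<And>t. t \<in> {real k<..<real k + 1} - S \<Longrightarrow>
       ((\<lambda>\<tau>. P \<tau> j) has_vector_derivative agent_speed n \<delta> (\<theta> j) (P t) j *\<^sub>R heading (\<theta> j)) (at t)"
    using is_solutionE[OF sol] \<open>j < n\<close> by metis
  have "norm (P t j - P (real k) j) \<le> 1 * (t - real k)"
  proof (rule norm_increment_le_of_deriv_le_countable[OF _ _ \<open>countable S\<close>])
    show "continuous_on {real k..t} (\<lambda>\<tau>. P \<tau> j)"
      using cont by (rule continuous_on_subset) (use t in auto)
    fix \<tau> assume "\<tau> \<in> {real k<..<t} - S"
    then have "\<tau> \<in> {real k<..<real k + 1} - S" using t by auto
    moreover have "norm (agent_speed n \<delta> (\<theta> j) (P \<tau>) j *\<^sub>R heading (\<theta> j)) \<le> 1"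
      using agent_speed_cases[of n \<delta> "\<theta> j" "P \<tau>" j] by auto
    ultimately show "\<exists>v. ((\<lambda>\<tau>. P \<tau> j) has_vector_derivative v) (at \<tau>) \<and> norm v \<le> 1"
      using deriv by blast
  qed (use t in auto)
  then show ?thesis using init by (simp add: dist_norm)
qed

lemma is_solution_progress:
  assumes sol: "is_solution n \<delta> k \<theta> p0 P" and "i < n" and "0 \<le> d" "d \<le> 1"
    and fast: "\<And>t. t \<in> {real k..real k + d} \<Longrightarrow> agent_speed n \<delta> (\<theta> i) (P t) i = 1"
  shows "d \<le> dist (P (real k + 1) i) (P (real k) i)"
proof -
  define h where "h = heading (\<theta> i)"
  obtain S where "countable S"
    and cont: "continuous_on {real k..real k + 1} (\<lambda>t. P t i)"
    and deriv: "\<And>t. t \<in> {real k<..<real k + 1} - S \<Longrightarrow>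
       ((\<lambda>\<tau>. P \<tau> i) has_vector_derivative agent_speed n \<delta> (\<theta> i) (P t) i *\<^sub>R h) (at t)"
    using is_solutionE[OF sol] \<open>i < n\<close> unfolding h_def by metis
  have deriv_h: "((\<lambda>\<tau>. h \<bullet> P \<tau> i) has_real_derivative agent_speed n \<delta> (\<theta> i) (P t) i) (at t)"
    if "t \<in> {real k<..<real k + 1} - S" for t
    using bounded_linear.has_vector_derivative[OF bounded_linear_inner_right deriv[OF that], of h]
    by (simp add: h_def has_real_derivative_iff_has_vector_derivative)
  have cont_h: "continuous_on {a..b} (\<lambda>\<tau>. h \<bullet> P \<tau> i)" if "real k \<le> a" "b \<le> real k + 1" for a b
    using continuous_on_subset[OF cont, of "{a..b}"] that by (auto intro: continuous_intros)
  have "1 * (real k + d - real k) \<le> h \<bullet> P (real k + d) i - h \<bullet> P (real k) i"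
  proof (rule increment_ge_of_deriv_ge_countable[OF _ cont_h \<open>countable S\<close>])
    fix t assume "t \<in> {real k<..<real k + d} - S"
    then have "t \<in> {real k<..<real k + 1} - S" "t \<in> {real k..real k + d}" using \<open>d \<le> 1\<close> by auto
    then show "\<exists>D. ((\<lambda>\<tau>. h \<bullet> P \<tau> i) has_real_derivative D) (at t) \<and> 1 \<le> D"
      using deriv_h fast by fastforce
  qed (use \<open>0 \<le> d\<close> \<open>d \<le> 1\<close> in auto)
  moreover have "0 * (real k + 1 - (real k + d)) \<le> h \<bullet> P (real k + 1) i - h \<bullet> P (real k + d) i"
  proof (rule increment_ge_of_deriv_ge_countable[OF _ cont_h \<open>countable S\<close>])
    fix t assume "t \<in> {real k + d<..<real k + 1} - S"
    then have "t \<in> {real k<..<real k + 1} - S" using \<open>0 \<le> d\<close> by auto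
    then show "\<exists>D. ((\<lambda>\<tau>. h \<bullet> P \<tau> i) has_real_derivative D) (at t) \<and> 0 \<le> D"
      using deriv_h agent_speed_cases[of n \<delta> "\<theta> i" "P t" i] by fastforce
  qed (use \<open>0 \<le> d\<close> \<open>d \<le> 1\<close> in auto)
  ultimately have "d \<le> h \<bullet> (P (real k + 1) i - P (real k) i)"
    by (simp add: inner_diff_right)
  also have "\<dots> \<le> norm (P (real k + 1) i - P (real k) i)"
    using norm_cauchy_schwarz[of h] by (simp add: h_def)
  finally show ?thesis by (simp add: dist_norm)
qed

lemma is_solution_moves_if_heading_in_cone:
  assumes sol: "is_solution n \<delta> k \<theta> p0 P" and "i < n" and "0 < s" "s \<le> 1"
    and cone: "\<And>j. j < n \<Longrightarrow> s * norm (p0 j - p0 i) \<le> heading (\<theta> i) \<bullet> (p0 j - p0 i)"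
    and "0 \<le> d" "d \<le> 1" "4 * d \<le> s * \<delta>"
  shows "d \<le> dist (P (real k + 1) i) (P (real k) i)"
proof (rule is_solution_progress[OF sol \<open>i < n\<close> \<open>0 \<le> d\<close> \<open>d \<le> 1\<close>])
  fix t assume t: "t \<in> {real k..real k + d}"
  then have t1: "t \<in> {real k..real k + 1}" using \<open>d \<le> 1\<close> by auto
  show "agent_speed n \<delta> (\<theta> i) (P t) i = 1"
  proof (rule agent_speed_eq_1I)
    fix j assume "j < n" and far: "\<delta> < dist (P t i) (P t j)"
    have "norm ((P t j - P t i) - (p0 j - p0 i)) \<le> dist (P t j) (p0 j) + dist (P t i) (p0 i)"
      using norm_triangle_ineq4[of "P t j - p0 j" "P t i - p0 i"] by (simp add: dist_norm algebra_simps)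
    also have "\<dots> \<le> 2 * d"
      using is_solution_dist_le[OF sol \<open>j < n\<close> t1] is_solution_dist_le[OF sol \<open>i < n\<close> t1] t by auto
    finally show "0 < heading (\<theta> i) \<bullet> (P t j - P t i)"
      using inner_pos_of_near_cone[OF norm_heading \<open>0 < s\<close> \<open>s \<le> 1\<close> cone[OF \<open>j < n\<close>]] far \<open>4 * d \<le> s * \<delta>\<close>
      by (simp add: dist_norm norm_minus_commute)
  qed
qed

lemma heading_measure_component_interval:
  assumes "i < n" "0 \<le> u" "u \<le> v" "v < 2 * pi"
  defines "A \<equiv> {\<theta> \<in> space (heading_measure n). \<theta> i \<in> {u..v}}"
  shows "A \<in> sets (heading_measure n)" and "measure (heading_measure n) A = (v - u) / (2 * pi)"
proof -
  define U where "U = uniform_measure lborel {0..<2 * pi}"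
  have "prob_space U"
    unfolding U_def by (intro prob_space_uniform_measure) (simp_all add: ennreal_neq_top)
  have M: "heading_measure n = PiM {..<n} (\<lambda>_. U)"
    by (simp add: heading_measure_def U_def)
  have meas: "(\<lambda>\<theta>. \<theta> i) \<in> measurable (heading_measure n) U"
    unfolding M using measurable_component_singleton[of i "{..<n}" "\<lambda>_. U"] \<open>i < n\<close> by simp
  have A: "A = (\<lambda>\<theta>. \<theta> i) -` {u..v} \<inter> space (heading_measure n)"
    by (auto simp: A_def)
  show "A \<in> sets (heading_measure n)"
    unfolding A by (rule measurable_sets[OF meas]) (simp add: U_def)
  have "distr (heading_measure n) U (\<lambda>\<theta>. \<theta> i) = U"
    unfolding M using distr_PiM_component[of "{..<n}" "\<lambda>_. U" i] \<open>prob_space U\<close> \<open>i < n\<close> by simp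
  then have "measure (heading_measure n) A = measure U {u..v}"
    using measure_distr[OF meas, of "{u..v}"] A by (simp add: U_def)
  also have "\<dots> = measure lborel ({0..<2 * pi} \<inter> {u..v}) / measure lborel {0..<2 * pi}"
    unfolding U_def by (rule measure_uniform_measure) (simp_all add: ennreal_neq_top)
  also have "{0..<2 * pi} \<inter> {u..v} = {u..v}" using assms by auto
  finally show "measure (heading_measure n) A = (v - u) / (2 * pi)"
    using assms by simp
qed

lemma exists_agent_moving:
  assumes "0 < n" "0 < \<delta>"
  shows "\<exists>d>0. \<forall>k p0. \<exists>i<n. \<exists>A \<in> sets (heading_measure n).
    A \<subseteq> {\<theta>. \<forall>P. is_solution n \<delta> k \<theta> p0 P \<longrightarrow> d \<le> dist (P (real k + 1) i) (P (real k) i)}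
    \<and> sin (pi / (2 * real n + 1)) / (4 * pi) \<le> measure (heading_measure n) A"
proof (intro exI[of _ "min 1 (sin (pi / (2 * real n + 1)) * \<delta> / 8)"] conjI allI)
  define \<sigma> where "\<sigma> = sin (pi / (2 * real n + 1))"
  have "0 < \<sigma>" "\<sigma> \<le> 1" using sin_pi_div_odd_gt_0[OF \<open>0 < n\<close>] by (simp_all add: \<sigma>_def)
  then show "0 < min 1 (\<sigma> * \<delta> / 8)" using \<open>0 < \<delta>\<close> by simp
  fix k p0
  obtain i u where "i < n" "0 \<le> u" "u + \<sigma> / 2 < 2 * pi"
    and cone: "\<And>a j. a \<in> {u..u + \<sigma> / 2} \<Longrightarrow> j < n \<Longrightarrow>
      \<sigma> / 2 * norm (p0 j - p0 i) \<le> heading a \<bullet> (p0 j - p0 i)"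
    using exists_heading_arc_cone[OF \<open>0 < n\<close>, of p0] unfolding \<sigma>_def by metis
  define A where "A = {\<theta> \<in> space (heading_measure n). \<theta> i \<in> {u..u + \<sigma> / 2}}"
  have "A \<in> sets (heading_measure n)" "measure (heading_measure n) A = \<sigma> / (4 * pi)"
    using heading_measure_component_interval[OF \<open>i < n\<close> \<open>0 \<le> u\<close> _ \<open>u + \<sigma> / 2 < 2 * pi\<close>] \<open>0 < \<sigma>\<close>
    by (simp_all add: A_def)
  moreover have "A \<subseteq> {\<theta>. \<forall>P. is_solution n \<delta> k \<theta> p0 P \<longrightarrow>
      min 1 (\<sigma> * \<delta> / 8) \<le> dist (P (real k + 1) i) (P (real k) i)}"
  proof (intro subsetI CollectI allI impI)
    fix \<theta> P assume "\<theta> \<in> A" and sol: "is_solution n \<delta> k \<theta> p0 P"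
    then have "\<theta> i \<in> {u..u + \<sigma> / 2}" by (simp add: A_def)
    then have "\<And>j. j < n \<Longrightarrow> \<sigma> / 2 * norm (p0 j - p0 i) \<le> heading (\<theta> i) \<bullet> (p0 j - p0 i)"
      by (rule cone)
    moreover have "0 < \<sigma> / 2" "\<sigma> / 2 \<le> 1" using \<open>0 < \<sigma>\<close> \<open>\<sigma> \<le> 1\<close> by simp_all
    moreover have "0 \<le> min 1 (\<sigma> * \<delta> / 8)" "min 1 (\<sigma> * \<delta> / 8) \<le> 1"
      "4 * min 1 (\<sigma> * \<delta> / 8) \<le> \<sigma> / 2 * \<delta>"
      using \<open>0 < \<sigma>\<close> \<open>0 < \<delta>\<close> by simp_all
    ultimately show "min 1 (\<sigma> * \<delta> / 8) \<le> dist (P (real k + 1) i) (P (real k) i)"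
      by (intro is_solution_moves_if_heading_in_cone[OF sol \<open>i < n\<close>])
  qed
  ultimately show "\<exists>i<n. \<exists>A \<in> sets (heading_measure n).
    A \<subseteq> {\<theta>. \<forall>P. is_solution n \<delta> k \<theta> p0 P \<longrightarrow> min 1 (\<sigma> * \<delta> / 8) \<le> dist (P (real k + 1) i) (P (real k) i)}
    \<and> \<sigma> / (4 * pi) \<le> measure (heading_measure n) A"
    using \<open>i < n\<close> by (intro exI[of _ i] conjI bexI[of _ A]) simp_all
qed

theorem lemma2:
  fixes n :: nat
  shows "\<exists>c>0. \<forall>\<delta>>0. \<exists>d>0. \<forall>(k::nat) (p0 :: nat \<Rightarrow> real^2).
     \<not> (\<exists>z. \<forall>i<n. dist (p0 i) z \<le> \<delta>) \<longrightarrow>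
     (\<exists>i<n. \<exists>A \<in> sets (heading_measure n).
        A \<subseteq> {\<theta>. \<forall>P. is_solution n \<delta> k \<theta> p0 P \<longrightarrow>
                     dist (P (real k + 1) i) (P (real k) i) \<ge> d}
        \<and> measure (heading_measure n) A \<ge> c)"
proof (cases "n = 0")
  case True
  then show ?thesis by (auto intro!: exI[of _ "1::real"])
next
  case False
  then have "0 < n" by simp
  show ?thesis
  proof (rule exI[of _ "sin (pi / (2 * real n + 1)) / (4 * pi)"], intro conjI allI impI)
    show "0 < sin (pi / (2 * real n + 1)) / (4 * pi)"
      using sin_pi_div_odd_gt_0[OF \<open>0 < n\<close>] by simp
  qed (rule ex_forward[OF exists_agent_moving[OF \<open>0 < n\<close>]], assumption, blast)
qed

end
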